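(* Let $S$ be a monoid such that the word $xt_1xyt_2y$ (distinct variables $x,y,t_1,t_2$) is an isoterm for $S$. Then for every $n\ge1$ the word $$(z_1\,t\,p_1\,t\,z_2\,t\,p_2\,t\cdots z_n\,t\,p_n\,t)(z_1q_1z_2q_2\cdots z_nq_n)(p_1r_1p_2r_2\cdots p_nr_n)(t\,q_1\,t\,r_1\,t\,q_2\,t\,r_2\cdots t\,q_n\,t\,r_n)$$ is an isoterm for $S$, where $z_i,p_i,q_i,r_i$ are distinct variables and each displayed occurrence of the letter $t$ denotes a different linear variable (distinct from each other and from all $z_i,p_i,q_i,r_i$).
   Context: Words are elements of the free semigroup over a countably infinite alphabet of variables. A monoid $S$ satisfies an identity $\mathbf u\approx\mathbf v$ if both sides are equal under every evaluation of the variables in $S$. A word $\mathbf w$ is an isoterm for $S$ if $S$ satisfies no identity $\mathbf w\approx\mathbf w'$ with $\mathbf w'\ne\mathbf w$. A variable is linear in a word if it occurs in it exactly once. *)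

theory Defs
  imports Main
begin

text \<open>Variables are natural numbers (a countably infinite alphabet); words are
nonempty lists of variables (elements of the free semigroup).  A monoid S is
a type of class monoid_mult.\<close>

type_synonym word = "nat list"

definition eval_word :: "(nat \<Rightarrow> 'a::monoid_mult) \<Rightarrow> word \<Rightarrow> 'a" where
  "eval_word \<phi> w = prod_list (map \<phi> w)"

definition satisfies :: "'a::monoid_mult itself \<Rightarrow> word \<Rightarrow> word \<Rightarrow> bool" where
  "satisfies S u v \<longleftrightarrow> (\<forall>\<phi> :: nat \<Rightarrow> 'a. eval_word \<phi> u = eval_word \<phi> v)"

definition isoterm :: "'a::monoid_mult itself \<Rightarrow> word \<Rightarrow> bool" where
  "isoterm S w \<longleftrightarrow> (\<forall>w'. w' \<noteq> [] \<and> satisfies S w w' \<longrightarrow> w' = w)"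

text \<open>Encoding of the variables of the word in Lemma 3.8, for i = 1..n:
z_i = 8i, p_i = 8i+1, q_i = 8i+2, r_i = 8i+3 and the four linear t's
attached to index i are 8i+4, 8i+5 (first factor), 8i+6, 8i+7 (last factor).\<close>

definition zv :: "nat \<Rightarrow> nat" where "zv i = 8*i"
definition pv :: "nat \<Rightarrow> nat" where "pv i = 8*i + 1"
definition qv :: "nat \<Rightarrow> nat" where "qv i = 8*i + 2"
definition rv :: "nat \<Rightarrow> nat" where "rv i = 8*i + 3"
definition tv :: "nat \<Rightarrow> nat \<Rightarrow> nat" where "tv i k = 8*i + 4 + k"  \<comment> \<open>k < 4\<close>

definition word_3p8 :: "nat \<Rightarrow> word" where
  "word_3p8 n =
     concat (map (\<lambda>i. [zv i, tv i 0, pv i, tv i 1]) [1..<n+1])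
   @ concat (map (\<lambda>i. [zv i, qv i]) [1..<n+1])
   @ concat (map (\<lambda>i. [pv i, rv i]) [1..<n+1])
   @ concat (map (\<lambda>i. [tv i 2, qv i, tv i 3, rv i]) [1..<n+1])"

text \<open>x t1 x y t2 y with x = 0, y = 1, t1 = 2, t2 = 3.\<close>
definition xtxyty :: word where "xtxyty = [0, 2, 0, 1, 3, 1]"

end

theory Submission
  imports Defs
begin

text \<open>Deleting letters from an identity gives an identity, and a factor of an isoterm,
renamed injectively, is again an isoterm.  So if S satisfies W \<approx> v, where W is the word of
the theorem, then v agrees with W on every set of letters to which W restricts as a renamed
factor of x t x y t' y.  These restrictions fix how often each letter occurs in v and, for most
pairs of consecutive occurrences in W, their order in v.  The remaining pairs, such as the first
q_i and the second z_(i+1), are ordered by contradiction: in the opposite order the restriction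
of v to these two letters and a linear neighbour of each would itself be the isoterm
x t x y t' y, which the restriction of W is not.  Hence all occurrences of letters appear in v
in the same order as in W, that is, v = W.\<close>

section \<open>Identities and isoterms\<close>

lemma eval_word_append: "eval_word \<phi> (u @ w) = eval_word \<phi> u * eval_word \<phi> w"
  by (simp add: eval_word_def)

lemma satisfies_sym: "satisfies S u v \<Longrightarrow> satisfies S v u"
  unfolding satisfies_def by simp

lemma satisfies_append:
  "satisfies S u v \<Longrightarrow> satisfies S u' v' \<Longrightarrow> satisfies S (u @ u') (v @ v')"
  unfolding satisfies_def by (simp add: eval_word_append)

lemma satisfies_map: "satisfies S u v \<Longrightarrow> satisfies S (map h u) (map h v)"
  unfolding satisfies_def eval_word_def by (simp add: comp_def)

lemma eval_word_filter: "eval_word \<phi> (filter P w) = eval_word (\<lambda>a. if P a then \<phi> a else 1) w"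
  by (induction w) (simp_all add: eval_word_def)

lemma satisfies_filter: "satisfies S u v \<Longrightarrow> satisfies S (filter P u) (filter P v)"
  unfolding satisfies_def by (simp add: eval_word_filter)

lemma satisfies_refl: "satisfies S u u"
  unfolding satisfies_def by simp

lemma isoterm_satisfies_Nil:
  assumes "isoterm S w" and "satisfies S [] u"
  shows "u = []"
proof -
  have "satisfies S w (w @ u)"
    using satisfies_append[OF satisfies_refl assms(2), of w] by simp
  then show ?thesis
    using assms(1) unfolding isoterm_def by (metis Nil_is_append_conv append_self_conv)
qed

lemma isoterm_satisfies_eq:
  assumes "isoterm S u" and "satisfies S u v"
  shows "v = u"
proof (cases "v = []")
  case True
  then show ?thesis
    using isoterm_satisfies_Nil[OF assms(1) satisfies_sym[OF assms(2)[unfolded True]]] by simp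
qed (use assms in \<open>auto simp: isoterm_def\<close>)

lemma isoterm_infix:
  assumes "isoterm S (p @ u @ s)"
  shows "isoterm S u"
  unfolding isoterm_def
proof (intro allI impI)
  fix v assume "v \<noteq> [] \<and> satisfies S u v"
  then have "satisfies S (p @ u @ s) (p @ v @ s)"
    by (intro satisfies_append satisfies_refl) simp
  then have "p @ v @ s = p @ u @ s"
    by (rule isoterm_satisfies_eq[OF assms])
  then show "v = u"
    by simp
qed

lemma isoterm_rename:
  assumes iso: "isoterm S (map h u)" and inj: "inj_on h (set u)"
    and fresh: "\<And>a. h a \<in> h ` set u \<Longrightarrow> a \<in> set u"
  shows "isoterm S u"
  unfolding isoterm_def
proof (intro allI impI)
  fix v assume "v \<noteq> [] \<and> satisfies S u v"
  then have hv: "map h v = map h u"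
    using isoterm_satisfies_eq[OF iso satisfies_map] by blast
  then have "set v \<subseteq> set u"
    using fresh by (metis image_eqI image_set subsetI)
  with hv inj show "v = u"
    by (metis inj_on_map_eq_map sup.absorb_iff2)
qed

lemma isoterm_xtxysy:
  assumes "isoterm S xtxyty" and "distinct [x, t, y, s]"
  shows "isoterm S [x, t, x, y, s, y]"
  by (rule isoterm_rename[where h = "\<lambda>a. if a = x then 0 else if a = t then 2
      else if a = y then 1 else if a = s then 3 else 4"])
    (use assms in \<open>auto simp: xtxyty_def inj_on_def split: if_splits\<close>)

lemma isoterm_xtx:
  assumes "isoterm S xtxyty" and "x \<noteq> t"
  shows "isoterm S [x, t, x]"
  by (rule isoterm_rename[where h = "\<lambda>a. if a = x then 0 else if a = t then 2 else 4"])
    (use isoterm_infix[of S "[]" "[0, 2, 0]" "[1, 3, 1]"] assms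
      in \<open>auto simp: xtxyty_def inj_on_def split: if_splits\<close>)

lemma isoterm_xtxy:
  assumes "isoterm S xtxyty" and "distinct [x, t, y]"
  shows "isoterm S [x, t, x, y]"
  by (rule isoterm_rename[where h = "\<lambda>a. if a = x then 0 else if a = t then 2
      else if a = y then 1 else 4"])
    (use isoterm_infix[of S "[]" "[0, 2, 0, 1]" "[3, 1]"] assms
      in \<open>auto simp: xtxyty_def inj_on_def split: if_splits\<close>)

lemma isoterm_xyty:
  assumes "isoterm S xtxyty" and "distinct [x, y, t]"
  shows "isoterm S [x, y, t, y]"
  by (rule isoterm_rename[where h = "\<lambda>a. if a = x then 0 else if a = y then 1
      else if a = t then 3 else 4"])
    (use isoterm_infix[of S "[0, 2]" "[0, 1, 3, 1]" "[]"] assms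
      in \<open>auto simp: xtxyty_def inj_on_def split: if_splits\<close>)

section \<open>Occurrences of letters\<close>

text \<open>The pair (a, k) stands for the occurrence of a that is preceded by k occurrences of a.\<close>

primrec occs :: "'a list \<Rightarrow> ('a \<times> nat) list" where
  "occs [] = []"
| "occs (a # w) = (a, 0) # map (\<lambda>(b, k). (b, if b = a then Suc k else k)) (occs w)"

lemma map_fst_occs [simp]: "map fst (occs w) = w"
  by (induction w) (auto simp: comp_def case_prod_beta)

lemma set_occs: "set (occs w) = {(a, k). k < count_list w a}"
proof (induction w)
  case (Cons b w)
  show ?case
    by (auto simp: Cons image_iff less_Suc_eq_0_disj split: if_splits)
qed simp

lemma distinct_occs: "distinct (occs w)"
proof (induction w)
  case (Cons a w)
  have "inj_on (\<lambda>(b, k). (b, if b = a then Suc k else k)) (set (occs w))"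
    by (auto simp: inj_on_def split: if_splits)
  with Cons show ?case
    by (auto simp: distinct_map)
qed simp

lemma occs_filter: "occs (filter P w) = filter (\<lambda>x. P (fst x)) (occs w)"
proof (induction w)
  case (Cons a w)
  let ?shift = "\<lambda>(b, k). (b, if b = a then Suc k else k)"
  have "filter (\<lambda>x. P (fst x)) (map ?shift (occs w))
      = map ?shift (filter (\<lambda>x. P (fst x)) (occs w))"
    by (simp add: filter_map comp_def case_prod_beta)
  moreover have "map ?shift (filter (\<lambda>x. P (fst x)) (occs w)) = filter (\<lambda>x. P (fst x)) (occs w)"
    if "\<not> P a"
    using that by (intro map_idI) auto
  ultimately show ?case
    using Cons by auto
qed simp

lemma occs_append: "occs (u @ w) = occs u @ map (\<lambda>(b, k). (b, count_list u b + k)) (occs w)"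
  by (induction u) (auto simp: comp_def case_prod_beta)

lemma occs_distinct: "distinct w \<Longrightarrow> occs w = map (\<lambda>a. (a, 0)) w"
  by (induction w) auto

lemma occs_append_distinct:
  "distinct w \<Longrightarrow> occs (u @ w) = occs u @ map (\<lambda>a. (a, count_list u a)) w"
  by (simp add: occs_append occs_distinct)

lemma count_list_filter: "count_list (filter P w) a = (if P a then count_list w a else 0)"
  by (induction w) auto

lemma count_list_eq_if_filter_eq:
  "filter P u = filter P w \<Longrightarrow> P a \<Longrightarrow> count_list u a = count_list w a"
  by (metis count_list_filter)

primrec position :: "'a list \<Rightarrow> 'a \<Rightarrow> nat" where
  "position [] x = 0"
| "position (a # xs) x = (if a = x then 0 else Suc (position xs x))"

definition before :: "'a list \<Rightarrow> 'a \<Rightarrow> 'a \<Rightarrow> bool" where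
  "before xs x y \<longleftrightarrow> x \<in> set xs \<and> y \<in> set xs \<and> position xs x < position xs y"

lemma inj_on_position: "inj_on (position xs) (set xs)"
  by (induction xs) (auto simp: inj_on_def split: if_splits)

lemma strict_sorted_map_position: "distinct xs \<Longrightarrow> sorted_wrt (<) (map (position xs) xs)"
proof (induction xs)
  case (Cons a xs)
  then have "map (position (a # xs)) (a # xs) = 0 # map Suc (map (position xs) xs)"
    by (auto intro: map_cong)
  moreover have "sorted_wrt (<) (0 # map Suc (map (position xs) xs))"
    using Cons by (simp add: sorted_wrt_map)
  ultimately show ?case
    by (simp only:)
qed simp

lemma transp_before: "transp (before xs)"
  unfolding transp_def before_def by auto

lemma before_total:
  "x \<in> set xs \<Longrightarrow> y \<in> set xs \<Longrightarrow> x \<noteq> y \<Longrightarrow> \<not> before xs x y \<Longrightarrow> before xs y x"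
  unfolding before_def using inj_on_position[of xs] by (metis inj_onD linorder_neqE_nat)

lemma before_filter: "P x \<Longrightarrow> P y \<Longrightarrow> before (filter P xs) x y \<longleftrightarrow> before xs x y"
  unfolding before_def by (induction xs) auto

lemma sorted_wrt_before_eq:
  assumes "distinct xs" "set u = set xs" "sorted_wrt (before xs) u"
  shows "u = xs"
proof -
  have "sorted_wrt (<) (map (position xs) u)"
    using assms(3) by (auto simp: sorted_wrt_map before_def elim: sorted_wrt_mono_rel[rotated])
  then have "map (position xs) u = map (position xs) xs"
    using assms(1,2) strict_sorted_map_position[OF assms(1)]
    by (intro sorted_distinct_set_unique) (auto simp: strict_sorted_iff)
  then show ?thesis
    using inj_on_position[of xs] assms(2) by (simp add: inj_on_map_eq_map)
qed

lemma eq_if_successively_before_occs: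
  assumes "\<And>a. count_list v a = count_list w a" and "successively (before (occs v)) (occs w)"
  shows "v = w"
proof -
  have "occs w = occs v"
    using assms distinct_occs[of v] transp_before[of "occs v"]
    by (intro sorted_wrt_before_eq) (simp_all add: set_occs successively_conv_sorted_wrt)
  then show ?thesis
    by (metis map_fst_occs)
qed

lemma before_occs_filter:
  "P a \<Longrightarrow> P b \<Longrightarrow>
    before (occs (filter P w)) (a, k) (b, l) \<longleftrightarrow> before (occs w) (a, k) (b, l)"
  by (simp add: occs_filter before_filter)

lemma before_occs_if_filter_eq:
  "filter P v = u \<Longrightarrow> P a \<Longrightarrow> P b \<Longrightarrow>
    before (occs u) (a, k) (b, l) \<Longrightarrow> before (occs v) (a, k) (b, l)"
  using before_occs_filter by metis

text \<open>If the second x came before the first y, the restriction of v to {x, t, y, s} would be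
the isoterm x t x y s y, and then so would be the restriction of w.\<close>

lemma before_occs_by_isoterm_swap:
  assumes sat: "satisfies S w v"
    and iso: "isoterm S [x, t, x, y, s, y]"
    and w: "filter (\<lambda>a. a \<in> {x, t, y, s}) w \<noteq> [x, t, x, y, s, y]"
    and xt: "filter (\<lambda>a. a \<in> {x, t}) v = [x, t, x]"
    and ys: "filter (\<lambda>a. a \<in> {y, s}) v = [y, s, y]"
    and dist: "distinct [x, t, y, s]"
  shows "before (occs v) (y, 0) (x, 1)"
proof (rule ccontr)
  assume not_before: "\<not> before (occs v) (y, 0) (x, 1)"
  let ?P = "\<lambda>a. a \<in> {x, t, y, s}"
  have counts: "count_list v x = 2" "count_list v t = 1" "count_list v y = 2" "count_list v s = 1"
    using arg_cong[OF xt, of "\<lambda>u. count_list u x"] arg_cong[OF xt, of "\<lambda>u. count_list u t"]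
      arg_cong[OF ys, of "\<lambda>u. count_list u y"] arg_cong[OF ys, of "\<lambda>u. count_list u s"] dist
    by (auto simp: count_list_filter)
  have "before (occs v) (x, 1) (y, 0)"
    using before_total[OF _ _ _ not_before] counts by (simp add: set_occs)
  moreover have "before (occs v) (x, 0) (t, 0)" "before (occs v) (t, 0) (x, 1)"
    by (rule before_occs_if_filter_eq[OF xt]; use dist in \<open>simp add: before_def\<close>)+
  moreover have "before (occs v) (y, 0) (s, 0)" "before (occs v) (s, 0) (y, 1)"
    by (rule before_occs_if_filter_eq[OF ys]; use dist in \<open>simp add: before_def\<close>)+
  ultimately have "successively (before (occs (filter ?P v))) (occs [x, t, x, y, s, y])"
    using dist by (simp add: before_occs_filter)
  moreover have "count_list (filter ?P v) a = count_list [x, t, x, y, s, y] a" for a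
    using counts dist by (auto simp: count_list_filter)
  ultimately have "filter ?P v = [x, t, x, y, s, y]"
    by (metis eq_if_successively_before_occs)
  then have "filter ?P w = [x, t, x, y, s, y]"
    using isoterm_satisfies_eq[OF iso] satisfies_sym[OF satisfies_filter[OF sat]] by metis
  with w show False ..
qed

lemma successively_concat_map:
  assumes "\<forall>i\<in>set is. g i \<noteq> [] \<and> successively R (g i)"
    and "successively (\<lambda>i j. R (last (g i)) (hd (g j))) is"
  shows "successively R (concat (map g is))"
  using assms
  by (induction "is" rule: induct_list012) (auto simp: successively_append_iff hd_append)

lemma successively_upt:
  "(\<And>i. m \<le> i \<Longrightarrow> Suc i < n \<Longrightarrow> P i (Suc i)) \<Longrightarrow> successively P [m..<n]"
  by (auto simp: successively_conv_nth)

lemma successively_concat_map_upt: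
  assumes "\<And>i. m \<le> i \<Longrightarrow> i < n \<Longrightarrow> g i \<noteq> [] \<and> successively R (g i)"
    and "\<And>i. m \<le> i \<Longrightarrow> Suc i < n \<Longrightarrow> R (last (g i)) (hd (g (Suc i)))"
  shows "successively R (concat (map g [m..<n]))"
  using assms by (intro successively_concat_map successively_upt) auto

lemma hd_concat_map_upt: "m < n \<Longrightarrow> g m \<noteq> [] \<Longrightarrow> hd (concat (map g [m..<n])) = hd (g m)"
  by (simp add: upt_conv_Cons)

lemma last_concat_map_upt:
  "m < n \<Longrightarrow> g (n - 1) \<noteq> [] \<Longrightarrow> last (concat (map g [m..<n])) = last (g (n - 1))"
  by (cases n) simp_all

lemma filter_concat_map_filter:
  assumes "\<forall>i\<in>set is. \<not> Q i \<longrightarrow> (\<forall>a\<in>set (f i). \<not> P a)"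
  shows "filter P (concat (map f is)) = filter P (concat (map f (filter Q is)))"
  using assms by (induction "is") (simp_all add: filter_empty_conv)

lemma filter_upt_eq:
  assumes "sorted_wrt (<) js" and "set js \<subseteq> {m..<n}"
  shows "filter (\<lambda>i. i \<in> set js) [m..<n] = js"
  using assms by (intro sorted_distinct_set_unique) (auto simp: strict_sorted_iff sorted_wrt_filter)

lemma count_list_concat_map:
  assumes "distinct js" and "\<And>i a. a \<in> set (f i) \<Longrightarrow> h a = i"
  shows "count_list (concat (map f js)) a = (if h a \<in> set js then count_list (f (h a)) a else 0)"
  using assms by (induction js) (auto simp: count_list_0_iff)

lemma distinct_concat_map:
  assumes "distinct js" and "\<And>i. distinct (f i)" and "\<And>i a. a \<in> set (f i) \<Longrightarrow> h a = i"
  shows "distinct (concat (map f js))"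
  using assms by (induction js) (auto, metis)

section \<open>The word of Lemma 3.8\<close>

lemma letter_eq_iff [simp]:
  "zv i = zv j \<longleftrightarrow> i = j" "pv i = pv j \<longleftrightarrow> i = j" "qv i = qv j \<longleftrightarrow> i = j"
  "rv i = rv j \<longleftrightarrow> i = j" "k < 4 \<Longrightarrow> l < 4 \<Longrightarrow> tv i k = tv j l \<longleftrightarrow> i = j \<and> k = l"
  "zv i \<noteq> pv j" "zv i \<noteq> qv j" "zv i \<noteq> rv j" "pv i \<noteq> qv j" "pv i \<noteq> rv j" "qv i \<noteq> rv j"
  "pv j \<noteq> zv i" "qv j \<noteq> zv i" "rv j \<noteq> zv i" "qv j \<noteq> pv i" "rv j \<noteq> pv i" "rv j \<noteq> qv i"
  "k < 4 \<Longrightarrow> zv i \<noteq> tv j k" "k < 4 \<Longrightarrow> pv i \<noteq> tv j k"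
  "k < 4 \<Longrightarrow> qv i \<noteq> tv j k" "k < 4 \<Longrightarrow> rv i \<noteq> tv j k"
  "k < 4 \<Longrightarrow> tv j k \<noteq> zv i" "k < 4 \<Longrightarrow> tv j k \<noteq> pv i"
  "k < 4 \<Longrightarrow> tv j k \<noteq> qv i" "k < 4 \<Longrightarrow> tv j k \<noteq> rv i"
  unfolding zv_def pv_def qv_def rv_def tv_def by presburger+

lemma letter_div [simp]:
  "zv i div 8 = i" "pv i div 8 = i" "qv i div 8 = i" "rv i div 8 = i"
  "k < 4 \<Longrightarrow> tv i k div 8 = i"
  by (simp_all add: zv_def pv_def qv_def rv_def tv_def)

definition word_blocks :: "nat list \<Rightarrow> word" where
  "word_blocks js =
     concat (map (\<lambda>i. [zv i, tv i 0, pv i, tv i 1]) js)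
   @ concat (map (\<lambda>i. [zv i, qv i]) js)
   @ concat (map (\<lambda>i. [pv i, rv i]) js)
   @ concat (map (\<lambda>i. [tv i 2, qv i, tv i 3, rv i]) js)"

lemma word_3p8_eq_word_blocks: "word_3p8 n = word_blocks [1..<n+1]"
  by (simp add: word_3p8_def word_blocks_def)

lemma filter_word_3p8:
  assumes "\<forall>a\<in>A. a div 8 \<in> set js" and "sorted_wrt (<) js" and "set js \<subseteq> {1..n}"
  shows "filter (\<lambda>a. a \<in> A) (word_3p8 n) = filter (\<lambda>a. a \<in> A) (word_blocks js)"
proof -
  have upt: "filter (\<lambda>i. i \<in> set js) [1..<n+1] = js"
    using assms(2,3) by (intro filter_upt_eq) auto
  have block: "filter (\<lambda>a. a \<in> A) (concat (map f [1..<n+1]))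
      = filter (\<lambda>a. a \<in> A) (concat (map f js))"
    if "\<And>i a. a \<in> set (f i) \<Longrightarrow> a div 8 = i" for f :: "nat \<Rightarrow> word"
    using filter_concat_map_filter[of "[1..<n+1]" "\<lambda>i. i \<in> set js"] assms(1) that
    unfolding upt by metis
  show ?thesis
    unfolding word_3p8_eq_word_blocks word_blocks_def filter_append
    by (intro arg_cong2[where f = "(@)"] block) auto
qed

lemma occs_word_blocks:
  assumes "distinct js"
  shows "occs (word_blocks js) =
     concat (map (\<lambda>i. [(zv i, 0), (tv i 0, 0), (pv i, 0), (tv i 1, 0)]) js)
   @ concat (map (\<lambda>i. [(zv i, 1), (qv i, 0)]) js)
   @ concat (map (\<lambda>i. [(pv i, 1), (rv i, 0)]) js)
   @ concat (map (\<lambda>i. [(tv i 2, 0), (qv i, 1), (tv i 3, 0), (rv i, 1)]) js)"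
    (is "_ = ?rhs")
proof -
  let ?B1 = "concat (map (\<lambda>i. [zv i, tv i 0, pv i, tv i 1]) js)"
  let ?B2 = "concat (map (\<lambda>i. [zv i, qv i]) js)"
  let ?B3 = "concat (map (\<lambda>i. [pv i, rv i]) js)"
  let ?B4 = "concat (map (\<lambda>i. [tv i 2, qv i, tv i 3, rv i]) js)"
  have distinct: "distinct ?B1" "distinct ?B2" "distinct ?B3" "distinct ?B4"
    by (rule distinct_concat_map[OF assms, where h = "\<lambda>a. a div 8"]; auto)+
  have count:
    "count_list ?B1 a = (if a div 8 \<in> set js
       then count_list [zv (a div 8), tv (a div 8) 0, pv (a div 8), tv (a div 8) 1] a else 0)"
    "count_list ?B2 a = (if a div 8 \<in> set js then count_list [zv (a div 8), qv (a div 8)] a else 0)"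
    "count_list ?B3 a = (if a div 8 \<in> set js then count_list [pv (a div 8), rv (a div 8)] a else 0)"
    for a
    by (rule count_list_concat_map[OF assms]; auto)+
  have "occs (word_blocks js) = occs (((?B1 @ ?B2) @ ?B3) @ ?B4)"
    by (simp add: word_blocks_def)
  also have "\<dots> = map (\<lambda>a. (a, 0)) ?B1 @ map (\<lambda>a. (a, count_list ?B1 a)) ?B2
      @ map (\<lambda>a. (a, count_list (?B1 @ ?B2) a)) ?B3
      @ map (\<lambda>a. (a, count_list ((?B1 @ ?B2) @ ?B3) a)) ?B4"
    by (simp only: occs_append_distinct distinct occs_distinct[OF distinct(1)],
        simp only: append_assoc)
  also have "\<dots> = ?rhs"
    by (simp add: count[simplified] map_concat cong: map_cong)
  finally show ?thesis .
qed

lemma filter_word_3p8_index: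
  assumes "1 \<le> i" "i \<le> n"
  shows "filter (\<lambda>a. a \<in> {zv i, tv i 0, qv i, tv i 2}) (word_3p8 n)
      = [zv i, tv i 0, zv i, qv i, tv i 2, qv i]"
    and "filter (\<lambda>a. a \<in> {pv i, tv i 1, rv i, tv i 3}) (word_3p8 n)
      = [pv i, tv i 1, pv i, rv i, tv i 3, rv i]"
    and "filter (\<lambda>a. a \<in> {tv i 0, pv i, tv i 1}) (word_3p8 n) = [tv i 0, pv i, tv i 1, pv i]"
    and "filter (\<lambda>a. a \<in> {qv i, tv i 2, tv i 3}) (word_3p8 n) = [qv i, tv i 2, qv i, tv i 3]"
    and "filter (\<lambda>a. a \<in> {zv i, tv i 0}) (word_3p8 n) = [zv i, tv i 0, zv i]"
    and "filter (\<lambda>a. a \<in> {pv i, tv i 1}) (word_3p8 n) = [pv i, tv i 1, pv i]"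
    and "filter (\<lambda>a. a \<in> {qv i, tv i 2}) (word_3p8 n) = [qv i, tv i 2, qv i]"
    and "filter (\<lambda>a. a \<in> {rv i, tv i 3}) (word_3p8 n) = [rv i, tv i 3, rv i]"
  by (subst filter_word_3p8[where js = "[i]"]; use assms in \<open>simp add: word_blocks_def\<close>)+

lemma filter_word_3p8_adjacent:
  assumes "1 \<le> i" "i < n"
  shows "filter (\<lambda>a. a \<in> {tv i 1, zv (Suc i), tv (Suc i) 0}) (word_3p8 n)
      = [tv i 1, zv (Suc i), tv (Suc i) 0, zv (Suc i)]"
    and "filter (\<lambda>a. a \<in> {rv i, tv i 3, tv (Suc i) 2}) (word_3p8 n)
      = [rv i, tv i 3, rv i, tv (Suc i) 2]"
    and "filter (\<lambda>a. a \<in> {zv (Suc i), tv (Suc i) 0, qv i, tv i 2}) (word_3p8 n)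
      = [zv (Suc i), tv (Suc i) 0, qv i, zv (Suc i), tv i 2, qv i]"
    and "filter (\<lambda>a. a \<in> {pv (Suc i), tv (Suc i) 1, rv i, tv i 3}) (word_3p8 n)
      = [pv (Suc i), tv (Suc i) 1, rv i, pv (Suc i), tv i 3, rv i]"
  by (subst filter_word_3p8[where js = "[i, Suc i]"]; use assms in \<open>simp add: word_blocks_def\<close>)+

lemma filter_word_3p8_ends:
  assumes "1 \<le> n"
  shows "filter (\<lambda>a. a \<in> {zv 1, tv n 1}) (word_3p8 n) = [zv 1, tv n 1, zv 1]"
    and "filter (\<lambda>a. a \<in> {rv n, tv 1 2}) (word_3p8 n) = [rv n, tv 1 2, rv n]"
    and "filter (\<lambda>a. a \<in> {pv 1, tv 1 1, qv n, tv n 2}) (word_3p8 n)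
      = [pv 1, tv 1 1, qv n, pv 1, tv n 2, qv n]"
  by (subst filter_word_3p8[where js = "if n = 1 then [1] else [1, n]"];
      use assms in \<open>simp add: word_blocks_def\<close>)+

lemma letters_word_3p8:
  assumes "a \<in> set (word_3p8 n)"
  obtains i where "1 \<le> i" "i \<le> n"
    and "a \<in> {zv i, tv i 0, qv i, tv i 2} \<or> a \<in> {pv i, tv i 1, rv i, tv i 3}"
  using assms unfolding word_3p8_def by auto

locale word_3p8_identity =
  fixes S :: "'a::monoid_mult itself" and n :: nat and v :: word
  assumes iso: "isoterm S xtxyty" and n_pos: "1 \<le> n" and sat: "satisfies S (word_3p8 n) v"
begin

lemmas isoterm_patterns =
  isoterm_xtxysy[OF iso] isoterm_xtxy[OF iso] isoterm_xyty[OF iso] isoterm_xtx[OF iso]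

lemma filter_eq_if_isoterm:
  assumes "filter P (word_3p8 n) = u" and "isoterm S u"
  shows "filter P v = u"
  using isoterm_satisfies_eq[OF assms(2)] satisfies_filter[OF sat, of P] assms(1) by metis

lemma before_occs_v:
  assumes "filter P (word_3p8 n) = u" and "isoterm S u"
    and "P a" "P b" and "before (occs u) (a, k) (b, l)"
  shows "before (occs v) (a, k) (b, l)"
  using before_occs_if_filter_eq[OF filter_eq_if_isoterm[OF assms(1,2)] assms(3-5)] .

lemma filter_v_index:
  assumes "1 \<le> i" "i \<le> n"
  shows "filter (\<lambda>a. a \<in> {zv i, tv i 0, qv i, tv i 2}) v = [zv i, tv i 0, zv i, qv i, tv i 2, qv i]"
    and "filter (\<lambda>a. a \<in> {pv i, tv i 1, rv i, tv i 3}) v = [pv i, tv i 1, pv i, rv i, tv i 3, rv i]"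
    and "filter (\<lambda>a. a \<in> {zv i, tv i 0}) v = [zv i, tv i 0, zv i]"
    and "filter (\<lambda>a. a \<in> {pv i, tv i 1}) v = [pv i, tv i 1, pv i]"
    and "filter (\<lambda>a. a \<in> {qv i, tv i 2}) v = [qv i, tv i 2, qv i]"
    and "filter (\<lambda>a. a \<in> {rv i, tv i 3}) v = [rv i, tv i 3, rv i]"
  using filter_word_3p8_index(1,2,5-8)[OF assms]
  by (simp_all add: filter_eq_if_isoterm isoterm_patterns)

lemma count_list_v: "count_list v a = count_list (word_3p8 n) a"
proof (cases "a \<in> set (word_3p8 n)")
  case False
  then have "filter (\<lambda>b. b = a) (word_3p8 n) = []"
    by (simp add: filter_empty_conv) blast
  then have "filter (\<lambda>b. b = a) v = []"
    using isoterm_satisfies_Nil[OF iso] satisfies_filter[OF sat, of "\<lambda>b. b = a"] by simp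
  then show ?thesis
    using False by (auto simp: count_list_0_iff filter_empty_conv)
next
  case True
  then obtain i where i: "1 \<le> i" "i \<le> n"
    and "a \<in> {zv i, tv i 0, qv i, tv i 2} \<or> a \<in> {pv i, tv i 1, rv i, tv i 3}"
    by (rule letters_word_3p8)
  then show ?thesis
    using count_list_eq_if_filter_eq[OF trans[OF filter_v_index(1) filter_word_3p8_index(1)[symmetric]]]
      count_list_eq_if_filter_eq[OF trans[OF filter_v_index(2) filter_word_3p8_index(2)[symmetric]]]
    by blast
qed

lemma before_occs_v_index:
  assumes "1 \<le> i" "i \<le> n"
  shows "successively (before (occs v)) [(zv i, 0), (tv i 0, 0), (pv i, 0), (tv i 1, 0)]"
    and "before (occs v) (zv i, 1) (qv i, 0)"
    and "before (occs v) (pv i, 1) (rv i, 0)"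
    and "successively (before (occs v)) [(tv i 2, 0), (qv i, 1), (tv i 3, 0), (rv i, 1)]"
proof -
  note F = filter_word_3p8_index[OF assms]
  have "before (occs v) (zv i, 0) (tv i 0, 0)" "before (occs v) (zv i, 1) (qv i, 0)"
    "before (occs v) (tv i 2, 0) (qv i, 1)"
    by (rule before_occs_v[OF F(1)]; simp add: isoterm_patterns before_def)+
  moreover have "before (occs v) (pv i, 0) (tv i 1, 0)" "before (occs v) (pv i, 1) (rv i, 0)"
    "before (occs v) (tv i 3, 0) (rv i, 1)"
    by (rule before_occs_v[OF F(2)]; simp add: isoterm_patterns before_def)+
  moreover have "before (occs v) (tv i 0, 0) (pv i, 0)"
    by (rule before_occs_v[OF F(3)]; simp add: isoterm_patterns before_def)
  moreover have "before (occs v) (qv i, 1) (tv i 3, 0)"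
    by (rule before_occs_v[OF F(4)]; simp add: isoterm_patterns before_def)
  ultimately show "successively (before (occs v)) [(zv i, 0), (tv i 0, 0), (pv i, 0), (tv i 1, 0)]"
    "before (occs v) (zv i, 1) (qv i, 0)" "before (occs v) (pv i, 1) (rv i, 0)"
    "successively (before (occs v)) [(tv i 2, 0), (qv i, 1), (tv i 3, 0), (rv i, 1)]"
    by simp_all
qed

lemma before_occs_v_adjacent:
  assumes "1 \<le> i" "i < n"
  shows "before (occs v) (tv i 1, 0) (zv (Suc i), 0)"
    and "before (occs v) (qv i, 0) (zv (Suc i), 1)"
    and "before (occs v) (rv i, 0) (pv (Suc i), 1)"
    and "before (occs v) (rv i, 1) (tv (Suc i) 2, 0)"
proof -
  note F = filter_word_3p8_adjacent[OF assms]
  have i: "1 \<le> i" "i \<le> n" and i': "1 \<le> Suc i" "Suc i \<le> n"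
    using assms by simp_all
  show "before (occs v) (tv i 1, 0) (zv (Suc i), 0)"
    by (rule before_occs_v[OF F(1)]; simp add: isoterm_patterns before_def)
  show "before (occs v) (rv i, 1) (tv (Suc i) 2, 0)"
    by (rule before_occs_v[OF F(2)]; simp add: isoterm_patterns before_def)
  show "before (occs v) (qv i, 0) (zv (Suc i), 1)"
    by (rule before_occs_by_isoterm_swap[OF sat isoterm_xtxysy[OF iso] _
          filter_v_index(3)[OF i'] filter_v_index(5)[OF i]])
      (unfold F(3), simp_all)
  show "before (occs v) (rv i, 0) (pv (Suc i), 1)"
    by (rule before_occs_by_isoterm_swap[OF sat isoterm_xtxysy[OF iso] _
          filter_v_index(4)[OF i'] filter_v_index(6)[OF i]])
      (unfold F(4), simp_all)
qed

lemma before_occs_v_ends: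
  shows "before (occs v) (tv n 1, 0) (zv 1, 1)"
    and "before (occs v) (qv n, 0) (pv 1, 1)"
    and "before (occs v) (rv n, 0) (tv 1 2, 0)"
proof -
  note F = filter_word_3p8_ends[OF n_pos]
  have first: "1 \<le> (1::nat)" "1 \<le> n" and last: "1 \<le> n" "n \<le> n"
    using n_pos by simp_all
  show "before (occs v) (tv n 1, 0) (zv 1, 1)"
    by (rule before_occs_v[OF F(1)]; use n_pos in \<open>simp add: isoterm_patterns before_def\<close>)
  show "before (occs v) (rv n, 0) (tv 1 2, 0)"
    by (rule before_occs_v[OF F(2)]; use n_pos in \<open>simp add: isoterm_patterns before_def\<close>)
  show "before (occs v) (qv n, 0) (pv 1, 1)"
    by (rule before_occs_by_isoterm_swap[OF sat isoterm_xtxysy[OF iso] _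
          filter_v_index(4)[OF first] filter_v_index(5)[OF last]])
      (unfold F(3), simp_all)
qed

lemma v_eq_word_3p8: "v = word_3p8 n"
proof (rule eq_if_successively_before_occs[OF count_list_v])
  let ?R = "before (occs v)"
  define M :: "(nat \<Rightarrow> (nat \<times> nat) list) \<Rightarrow> (nat \<times> nat) list"
    where "M g = concat (map g [1..<n+1])" for g
  let ?g1 = "\<lambda>i. [(zv i, 0), (tv i 0, 0), (pv i, 0), (tv i 1, 0)]"
  let ?g2 = "\<lambda>i. [(zv i, 1), (qv i, 0)]"
  let ?g3 = "\<lambda>i. [(pv i, 1), (rv i, 0)]"
  let ?g4 = "\<lambda>i. [(tv i 2, 0), (qv i, 1), (tv i 3, 0), (rv i, 1)]"
  have M: "M g \<noteq> []" "hd (M g) = hd (g 1)" "last (M g) = last (g n)" if "\<And>i. g i \<noteq> []" for g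
    using that n_pos unfolding M_def
    by (auto simp del: upt_Suc simp: hd_concat_map_upt last_concat_map_upt)
  have "successively ?R (M ?g1)"
    unfolding M_def
    by (rule successively_concat_map_upt)
      (use before_occs_v_index(1) before_occs_v_adjacent(1) in auto)
  moreover have "successively ?R (M ?g2)"
    unfolding M_def
    by (rule successively_concat_map_upt)
      (use before_occs_v_index(2) before_occs_v_adjacent(2) in auto)
  moreover have "successively ?R (M ?g3)"
    unfolding M_def
    by (rule successively_concat_map_upt)
      (use before_occs_v_index(3) before_occs_v_adjacent(3) in auto)
  moreover have "successively ?R (M ?g4)"
    unfolding M_def
    by (rule successively_concat_map_upt)
      (use before_occs_v_index(4) before_occs_v_adjacent(4) in auto)
  moreover have "occs (word_3p8 n) = M ?g1 @ M ?g2 @ M ?g3 @ M ?g4"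
    unfolding M_def word_3p8_eq_word_blocks by (rule occs_word_blocks[OF distinct_upt])
  ultimately show "successively ?R (occs (word_3p8 n))"
    using before_occs_v_ends by (simp add: successively_append_iff M)
qed

end

theorem lemma3p8:
  fixes S :: "'a::monoid_mult itself" and n :: nat
  assumes "isoterm S xtxyty"
    and "n \<ge> 1"
  shows "isoterm S (word_3p8 n)"
  unfolding isoterm_def
proof (intro allI impI)
  fix v assume "v \<noteq> [] \<and> satisfies S (word_3p8 n) v"
  then interpret word_3p8_identity S n v
    using assms by unfold_locales auto
  show "v = word_3p8 n"
    by (rule v_eq_word_3p8)
qed

end
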